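(* Let $P=[-1,\infty)$ and let $\tilde v(x)=p(x)e^{-\lambda x}$, $\tilde w(x)=q(x)e^{-\lambda x}$, where $p$ is a positive rational function on $P$, $q$ is a polynomial and $\lambda>0$. Suppose that $\mathcal F_{\tilde v,\tilde w}$ vanishes on the affine-linear functions and that $P$ is $(\tilde v,\tilde w)$ K-stable. Then the $(\tilde v,\tilde w)$-cscK metric $\omega$ on $\mathbb C$ with moment image $P$ satisfies $\omega\in\mathcal H^\varepsilon_{\alpha,T}$ for every $\varepsilon\in(0,\tfrac12)$.
   Context: $S^1$ acts on $\mathbb C$ by rotation with generator $Y$ of period $2\pi$. A metric on $\mathbb C$ with moment image $P$ is an $S^1$-invariant Kähler metric with proper moment map $\mu$ with image $[-1,\infty)$. Write $H(x)=g(Y,Y)$ at points where $\mu=x$; the symplectic potential $u$ on $(-1,\infty)$ satisfies $u''=1/H$. The metric is $(\tilde v,\tilde w)$-cscK if $-(\tilde vH)''=\tilde w$ on $(-1,\infty)$ (equivalently $\tilde v(\mu)\mathrm{Scal}(\omega)+2\Delta_\omega\tilde v(\mu)+g(Y,Y)\tilde v''(\mu)=\tilde w(\mu)$). Under the stated K-stability such a metric exists, and it is unique since $H$ solves this ODE with $H(-1)=0$, $H'(-1)=2$. Futaki invariant: $\mathcal F_{\tilde v,\tilde w}(f)=2\tilde v(-1)f(-1)-\int_{-1}^\infty f\tilde w\,dx$. $P$ is $(\tilde v,\tilde w)$ K-stable if $\mathcal F_{\tilde v,\tilde w}(f)\ge0$ for every convex piecewise-linear $f$ (maximum of finitely many affine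 functions), with equality only for affine $f$. $P_\delta=[-1+\delta,\infty)$. Class $\mathcal H^\varepsilon_{\alpha,T}$ (with respect to the weight $v=\tilde v$): $\omega$ lies in it if (1) $\sup_P \tilde v^\varepsilon H^2<\infty$; (2) $\sup_P\tilde v^\varepsilon |H'|^2<\infty$; (3) there are $\bar\delta,C>0$ with $|H''|^2<C$ on $[-1,-1+\bar\delta]$; (4) $\sup_P|\tilde v^\varepsilon u|<\infty$ and $\sum_{k\le2}\sup_{P_\delta}|\tilde v^\varepsilon u^{(k)}|<\infty$ for all small $\delta>0$. *)

theory Defs
  imports "HOL-Analysis.Analysis" "HOL-Computational_Algebra.Polynomial"
begin

definition futaki :: "(real \<Rightarrow> real) \<Rightarrow> (real \<Rightarrow> real) \<Rightarrow> (real \<Rightarrow> real) \<Rightarrow> real" where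
  "futaki v w f = 2 * v (-1) * f (-1) - (LBINT x:{-1..}. f x * w x)"

definition convex_pl :: "(real \<Rightarrow> real) \<Rightarrow> bool" where
  "convex_pl f \<longleftrightarrow> (\<exists>A :: (real \<times> real) set. finite A \<and> A \<noteq> {} \<and>
      f = (\<lambda>x. Max ((\<lambda>(a, b). a * x + b) ` A)))"

definition affine_on_P :: "(real \<Rightarrow> real) \<Rightarrow> bool" where
  "affine_on_P f \<longleftrightarrow> (\<exists>a b. \<forall>x\<in>{-1..}. f x = a * x + b)"

definition K_stable :: "(real \<Rightarrow> real) \<Rightarrow> (real \<Rightarrow> real) \<Rightarrow> bool" where
  "K_stable v w \<longleftrightarrow> (\<forall>f. convex_pl f \<longrightarrow>
      futaki v w f \<ge> 0 \<and> (futaki v w f = 0 \<longrightarrow> affine_on_P f))"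

text \<open>H (the function g(Y,Y) as function of the moment map) is the moment profile of
  the (v,w)-cscK metric on C with moment image [-1,infinity).\<close>
definition cscK_profile :: "(real \<Rightarrow> real) \<Rightarrow> (real \<Rightarrow> real) \<Rightarrow> (real \<Rightarrow> real) \<Rightarrow> bool" where
  "cscK_profile v w H \<longleftrightarrow>
     (\<forall>x>-1. H differentiable at x \<and> deriv H differentiable at x \<and> H x > 0) \<and>
     H (-1) = 0 \<and> (H has_real_derivative 2) (at (-1) within {-1..}) \<and>
     (\<forall>x>-1. - deriv (deriv (\<lambda>y. v y * H y)) x = w x)"

definition symp_potential :: "(real \<Rightarrow> real) \<Rightarrow> (real \<Rightarrow> real) \<Rightarrow> bool" where
  "symp_potential H u \<longleftrightarrow>
     (\<forall>x>-1. u differentiable at x \<and> deriv u differentiable at x \<and>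
              deriv (deriv u) x = 1 / H x)"

definition in_H_class :: "real \<Rightarrow> (real \<Rightarrow> real) \<Rightarrow> (real \<Rightarrow> real) \<Rightarrow> bool" where
  "in_H_class eps v H \<longleftrightarrow>
     (\<exists>C. \<forall>x\<in>{-1..}. v x powr eps * (H x)\<^sup>2 \<le> C) \<and>
     (\<exists>C. \<forall>x\<in>{-1<..}. v x powr eps * \<bar>deriv H x\<bar>\<^sup>2 \<le> C) \<and>
     (\<exists>\<delta> C. \<delta> > 0 \<and> C > 0 \<and> (\<forall>x\<in>{-1<..-1+\<delta>}. \<bar>deriv (deriv H) x\<bar>\<^sup>2 < C)) \<and>
     (\<forall>u. symp_potential H u \<longrightarrow>
        (\<exists>C. \<forall>x\<in>{-1<..}. \<bar>v x powr eps * u x\<bar> \<le> C) \<and>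
        (\<exists>\<delta>0>0. \<forall>\<delta>. 0 < \<delta> \<and> \<delta> < \<delta>0 \<longrightarrow>
           (\<forall>k\<le>(2::nat). \<exists>C. \<forall>x\<in>{-1+\<delta>..}. \<bar>v x powr eps * (deriv ^^ k) u x\<bar> \<le> C)))"

end

theory Submission
  imports Defs "HOL-Computational_Algebra.Fundamental_Theorem_Algebra" "HOL-Real_Asymp.Real_Asymp"
begin

text \<open>
  Vanishing of the Futaki invariant on affine functions fixes the moments
  \<integral>w = 2v(-1) and \<integral>xw = -2v(-1). Because w = q e^(-\<lambda>x), the equation (vH)'' = -w
  can be integrated among functions of the form polynomial times e^(-\<lambda>x): writing
  q = \<lambda>S - S' and S = \<lambda>T - T', the function G = -T e^(-\<lambda>x) satisfies G'' = -w, and the two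
  moments say precisely that G(-1) = 0 and G'(-1) = 2v(-1), the boundary values of vH.
  Hence vH = G, so H = -Tb/a is a rational function without poles on P. Then H, its
  derivatives and the potential u (integrate u'' = 1/H twice) all grow at most polynomially,
  while v^\<epsilon> decays like e^(-\<epsilon>\<lambda>x). Near -1, H has a simple zero, so u'' \<le> K/(x+1),
  which keeps u bounded there.
\<close>

section \<open>Rational functions and polynomial growth\<close>

definition poly_growth_on :: "real set \<Rightarrow> (real \<Rightarrow> real) \<Rightarrow> bool" where
  "poly_growth_on S f \<longleftrightarrow> (\<exists>C m. \<forall>x\<in>S. \<bar>f x\<bar> \<le> C * (1 + \<bar>x\<bar>) ^ m)"

lemma poly_growth_bound_mono:
  fixes x :: real
  assumes "\<bar>y\<bar> \<le> C * (1 + \<bar>x\<bar>) ^ m" "m \<le> n"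
  shows "\<bar>y\<bar> \<le> \<bar>C\<bar> * (1 + \<bar>x\<bar>) ^ n"
proof -
  have "C * (1 + \<bar>x\<bar>) ^ m \<le> \<bar>C\<bar> * (1 + \<bar>x\<bar>) ^ m" by (intro mult_right_mono) auto
  also have "\<dots> \<le> \<bar>C\<bar> * (1 + \<bar>x\<bar>) ^ n" by (intro mult_left_mono power_increasing assms(2)) auto
  finally show ?thesis using assms(1) by linarith
qed

lemma poly_growth_on_subset: "poly_growth_on S f \<Longrightarrow> T \<subseteq> S \<Longrightarrow> poly_growth_on T f"
  unfolding poly_growth_on_def by blast

lemma poly_growth_on_cong:
  "poly_growth_on S f \<Longrightarrow> (\<And>x. x \<in> S \<Longrightarrow> g x = f x) \<Longrightarrow> poly_growth_on S g"
  unfolding poly_growth_on_def by auto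

lemma poly_growth_on_bounded: "(\<And>x. x \<in> S \<Longrightarrow> \<bar>f x\<bar> \<le> B) \<Longrightarrow> poly_growth_on S f"
  unfolding poly_growth_on_def by (intro exI[of _ B] exI[of _ 0]) simp

lemma poly_growth_on_poly: "poly_growth_on S (poly A)"
proof -
  have "\<bar>poly A x\<bar> \<le> (\<Sum>i\<le>degree A. \<bar>coeff A i\<bar>) * (1 + \<bar>x\<bar>) ^ degree A" for x :: real
  proof -
    have "\<bar>poly A x\<bar> \<le> (\<Sum>i\<le>degree A. \<bar>coeff A i * x ^ i\<bar>)"
      unfolding poly_altdef by (rule sum_abs)
    also have "\<dots> \<le> (\<Sum>i\<le>degree A. \<bar>coeff A i\<bar> * (1 + \<bar>x\<bar>) ^ degree A)"
    proof (rule sum_mono)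
      fix i assume "i \<in> {..degree A}"
      have "\<bar>x\<bar> ^ i \<le> (1 + \<bar>x\<bar>) ^ degree A"
        using \<open>i \<in> {..degree A}\<close> by (intro order.trans[OF power_mono power_increasing]) auto
      then show "\<bar>coeff A i * x ^ i\<bar> \<le> \<bar>coeff A i\<bar> * (1 + \<bar>x\<bar>) ^ degree A"
        by (simp add: abs_mult power_abs mult_left_mono)
    qed
    finally show ?thesis by (simp add: sum_distrib_right)
  qed
  then show ?thesis unfolding poly_growth_on_def by blast
qed

lemma poly_growth_on_mult:
  assumes "poly_growth_on S f" "poly_growth_on S g"
  shows "poly_growth_on S (\<lambda>x. f x * g x)"
proof -
  obtain C m D n where C: "\<forall>x\<in>S. \<bar>f x\<bar> \<le> C * (1 + \<bar>x\<bar>) ^ m"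
    and D: "\<forall>x\<in>S. \<bar>g x\<bar> \<le> D * (1 + \<bar>x\<bar>) ^ n"
    using assms unfolding poly_growth_on_def by blast
  have "\<bar>f x * g x\<bar> \<le> (C * D) * (1 + \<bar>x\<bar>) ^ (m + n)" if "x \<in> S" for x
  proof -
    have "\<bar>f x * g x\<bar> \<le> (C * (1 + \<bar>x\<bar>) ^ m) * (D * (1 + \<bar>x\<bar>) ^ n)"
      unfolding abs_mult using C D that by (intro mult_mono) auto
    then show ?thesis by (simp add: power_add mult_ac)
  qed
  then show ?thesis unfolding poly_growth_on_def by blast
qed

lemma poly_growth_on_add:
  assumes "poly_growth_on S f" "poly_growth_on S g"
  shows "poly_growth_on S (\<lambda>x. f x + g x)"
proof -
  obtain C m D n where C: "\<forall>x\<in>S. \<bar>f x\<bar> \<le> C * (1 + \<bar>x\<bar>) ^ m"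
    and D: "\<forall>x\<in>S. \<bar>g x\<bar> \<le> D * (1 + \<bar>x\<bar>) ^ n"
    using assms unfolding poly_growth_on_def by blast
  have "\<bar>f x + g x\<bar> \<le> (\<bar>C\<bar> + \<bar>D\<bar>) * (1 + \<bar>x\<bar>) ^ (m + n)" if "x \<in> S" for x
    using poly_growth_bound_mono[of "f x" C x m "m + n"] poly_growth_bound_mono[of "g x" D x n "m + n"]
      C D that by (simp add: distrib_right abs_triangle_ineq[THEN order_trans])
  then show ?thesis unfolding poly_growth_on_def by blast
qed

lemma poly_growth_on_Un:
  assumes "poly_growth_on S f" "poly_growth_on T f"
  shows "poly_growth_on (S \<union> T) f"
proof -
  obtain C m D n where C: "\<forall>x\<in>S. \<bar>f x\<bar> \<le> C * (1 + \<bar>x\<bar>) ^ m"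
    and D: "\<forall>x\<in>T. \<bar>f x\<bar> \<le> D * (1 + \<bar>x\<bar>) ^ n"
    using assms unfolding poly_growth_on_def by blast
  have "\<bar>f x\<bar> \<le> (\<bar>C\<bar> + \<bar>D\<bar>) * (1 + \<bar>x\<bar>) ^ (m + n)" if "x \<in> S \<union> T" for x
    using poly_growth_bound_mono[of "f x" C x m "m + n"] poly_growth_bound_mono[of "f x" D x n "m + n"]
      C D that by (auto simp: distrib_right intro: add_increasing2 add_increasing)
  then show ?thesis unfolding poly_growth_on_def by blast
qed

lemma poly_growth_on_imp_bounded:
  assumes "poly_growth_on S f" "\<And>x. x \<in> S \<Longrightarrow> \<bar>x\<bar> \<le> r"
  shows "\<exists>B. \<forall>x\<in>S. \<bar>f x\<bar> \<le> B"
proof -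
  obtain C m where C: "\<forall>x\<in>S. \<bar>f x\<bar> \<le> C * (1 + \<bar>x\<bar>) ^ m"
    using assms(1) unfolding poly_growth_on_def by blast
  have "\<bar>f x\<bar> \<le> \<bar>C\<bar> * (1 + r) ^ m" if "x \<in> S" for x
  proof -
    have "\<bar>f x\<bar> \<le> \<bar>C\<bar> * (1 + \<bar>x\<bar>) ^ m"
      using poly_growth_bound_mono[of "f x" C x m m] C that by auto
    also have "\<dots> \<le> \<bar>C\<bar> * (1 + r) ^ m"
      using assms(2)[OF that] by (intro mult_left_mono power_mono) auto
    finally show ?thesis .
  qed
  then show ?thesis by blast
qed

lemma poly_bounded_away_from_zero:
  fixes B :: "real poly"
  assumes nz: "\<forall>x\<ge>c. poly B x \<noteq> 0"
  shows "\<exists>\<beta>>0. \<forall>x\<ge>c. \<beta> \<le> \<bar>poly B x\<bar>"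
proof (cases B)
  case (pCons a B')
  show ?thesis
  proof (cases "B' = 0")
    case True
    with nz pCons show ?thesis by (metis order_refl poly_pCons poly_0 mult_zero_right add_0_right
        zero_less_abs_iff)
  next
    case False
    obtain r where r: "\<forall>z::real. r \<le> norm z \<longrightarrow> 1 \<le> norm (poly B z)"
      using poly_infinity[OF False] pCons by blast
    define M where "M = max c r"
    have "continuous_on {c..M} (\<lambda>x. \<bar>poly B x\<bar>)"
      by (intro continuous_intros)
    then obtain x0 where x0: "x0 \<in> {c..M}" "\<forall>y\<in>{c..M}. \<bar>poly B x0\<bar> \<le> \<bar>poly B y\<bar>"
      using continuous_attains_inf[of "{c..M}" "\<lambda>x. \<bar>poly B x\<bar>"] by (auto simp: M_def)
    have "\<bar>poly B x0\<bar> > 0" using nz x0 by auto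
    moreover have "min 1 \<bar>poly B x0\<bar> \<le> \<bar>poly B x\<bar>" if "c \<le> x" for x
      using x0(2) r that by (cases "x \<le> M") (auto simp: M_def min_le_iff_disj)
    ultimately show ?thesis by (intro exI[of _ "min 1 \<bar>poly B x0\<bar>"]) auto
  qed
qed

lemma poly_growth_on_rational:
  fixes A B :: "real poly"
  assumes "\<forall>x\<ge>c. poly B x \<noteq> 0"
  shows "poly_growth_on {c..} (\<lambda>x. poly A x / poly B x)"
proof -
  obtain \<beta> where \<beta>: "\<beta> > 0" "\<forall>x\<ge>c. \<beta> \<le> \<bar>poly B x\<bar>"
    using poly_bounded_away_from_zero[OF assms] by blast
  have "poly_growth_on {c..} (\<lambda>x. 1 / poly B x)"
    by (rule poly_growth_on_bounded[of _ _ "1 / \<beta>"]) (use \<beta> in \<open>auto simp: divide_simps\<close>)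
  from poly_growth_on_mult[OF poly_growth_on_poly this] show ?thesis by simp
qed

lemma has_real_derivative_rational:
  fixes A B :: "real poly"
  assumes "poly B x \<noteq> 0"
  shows "((\<lambda>y. poly A y / poly B y) has_real_derivative
           poly (pderiv A * B - A * pderiv B) x / poly (B * B) x) (at x)"
  using DERIV_divide[OF poly_DERIV[of A x] poly_DERIV[of B x] assms] by simp

lemma deriv_rational_on_open:
  fixes A B :: "real poly"
  assumes "open S" "\<And>y. y \<in> S \<Longrightarrow> f y = poly A y / poly B y" "\<And>y. y \<in> S \<Longrightarrow> poly B y \<noteq> 0"
    and "x \<in> S"
  shows "deriv f x = poly (pderiv A * B - A * pderiv B) x / poly (B * B) x"
  by (rule DERIV_imp_deriv, rule has_field_derivative_transform_within_open
      [OF has_real_derivative_rational[OF assms(3)[OF assms(4)]] assms(1,4)]) (simp add: assms(2))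

lemma poly_growth_on_integrate:
  assumes der: "\<And>x. x \<ge> c \<Longrightarrow> (f has_real_derivative g x) (at x)"
    and "poly_growth_on {c..} g"
  shows "poly_growth_on {c..} f"
proof -
  obtain C m where C: "\<forall>x\<in>{c..}. \<bar>g x\<bar> \<le> C * (1 + \<bar>x\<bar>) ^ m"
    using assms(2) unfolding poly_growth_on_def by blast
  define K where "K = \<bar>f c\<bar> + \<bar>C\<bar> * (1 + \<bar>c\<bar>) ^ Suc m"
  have "\<bar>f x\<bar> \<le> K * (1 + \<bar>x\<bar>) ^ Suc m" if x: "x \<ge> c" for x
  proof -
    have scale: "1 + \<bar>t\<bar> \<le> (1 + \<bar>c\<bar>) * (1 + \<bar>x\<bar>)" if "\<bar>t\<bar> \<le> \<bar>c\<bar> + \<bar>x\<bar>" for t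
    proof -
      have "(1 + \<bar>c\<bar>) * (1 + \<bar>x\<bar>) = 1 + \<bar>c\<bar> + \<bar>x\<bar> + \<bar>c\<bar> * \<bar>x\<bar>"
        by (simp add: algebra_simps)
      then show ?thesis using that abs_ge_zero[of "c * x"] unfolding abs_mult by linarith
    qed
    have increment: "\<bar>f x - f c\<bar> \<le> \<bar>C\<bar> * ((1 + \<bar>c\<bar>) * (1 + \<bar>x\<bar>)) ^ Suc m"
    proof (cases "x = c")
      case False
      with x obtain z where z: "c < z" "z < x" "f x - f c = (x - c) * g z"
        using MVT2[of c x f g] der by force
      have "\<bar>g z\<bar> \<le> \<bar>C\<bar> * (1 + \<bar>z\<bar>) ^ m"
        using poly_growth_bound_mono[of "g z" C z m m] C z by simp
      also have "\<dots> \<le> \<bar>C\<bar> * ((1 + \<bar>c\<bar>) * (1 + \<bar>x\<bar>)) ^ m"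
        using scale[of z] z by (intro mult_left_mono power_mono) arith+
      finally have "\<bar>x - c\<bar> * \<bar>g z\<bar> \<le> ((1 + \<bar>c\<bar>) * (1 + \<bar>x\<bar>)) * (\<bar>C\<bar> * ((1 + \<bar>c\<bar>) * (1 + \<bar>x\<bar>)) ^ m)"
        using scale[of "x - c"] by (intro mult_mono) arith+
      then show ?thesis using z by (simp add: abs_mult mult_ac)
    qed simp
    have "1 \<le> (1 + \<bar>x\<bar>) ^ Suc m" by (rule one_le_power) simp
    then have "\<bar>f c\<bar> \<le> \<bar>f c\<bar> * (1 + \<bar>x\<bar>) ^ Suc m" by (simp add: mult_le_cancel_left1)
    moreover have "\<bar>f x\<bar> \<le> \<bar>f c\<bar> + \<bar>f x - f c\<bar>" by linarith
    moreover have "\<bar>C\<bar> * ((1 + \<bar>c\<bar>) * (1 + \<bar>x\<bar>)) ^ Suc m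
        = \<bar>C\<bar> * (1 + \<bar>c\<bar>) ^ Suc m * (1 + \<bar>x\<bar>) ^ Suc m"
      by (simp only: power_mult_distrib mult.assoc)
    ultimately show ?thesis using increment unfolding K_def distrib_right by linarith
  qed
  then show ?thesis unfolding poly_growth_on_def by (intro exI[of _ K] exI[of _ "Suc m"]) auto
qed

lemma power_le_exp:
  assumes "(y::real) \<ge> 0"
  shows "y ^ n \<le> real n ^ n * exp y"
proof (cases "n = 0")
  case False
  then have "(y / real n) ^ n \<le> (1 + y / real n) ^ n"
    using assms by (intro power_mono) auto
  also have "\<dots> \<le> exp y"
    using assms False by (intro exp_ge_one_plus_x_over_n_power_n) auto
  finally show ?thesis using False by (simp add: power_divide field_simps)
qed (use assms in simp)

lemma poly_growth_on_exp_decay: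
  assumes "poly_growth_on S f" "S \<subseteq> {c..}" "a > 0"
  shows "\<exists>K. \<forall>x\<in>S. \<bar>f x\<bar> * exp (- a * x) \<le> K"
proof -
  obtain C m where C: "\<forall>x\<in>S. \<bar>f x\<bar> \<le> C * (1 + \<bar>x\<bar>) ^ m"
    using assms(1) unfolding poly_growth_on_def by blast
  define d where "d = 1 + 2 * \<bar>c\<bar>"
  have "\<bar>f x\<bar> * exp (- a * x) \<le> \<bar>C\<bar> * (real m ^ m / a ^ m) * exp (a * d)" if "x \<in> S" for x
  proof -
    have x: "x \<ge> c" using that assms(2) by auto
    have "(1 + \<bar>x\<bar>) ^ m \<le> (d + x) ^ m" using x by (intro power_mono) (auto simp: d_def)
    also have "\<dots> = (a * (d + x)) ^ m / a ^ m" using assms(3) by (simp add: power_mult_distrib)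
    also have "\<dots> \<le> real m ^ m * exp (a * (d + x)) / a ^ m"
      using power_le_exp[of "a * (d + x)" m] x assms(3) by (intro divide_right_mono) (auto simp: d_def)
    finally have growth: "(1 + \<bar>x\<bar>) ^ m \<le> real m ^ m * exp (a * (d + x)) / a ^ m" .
    have "\<bar>f x\<bar> \<le> \<bar>C\<bar> * (1 + \<bar>x\<bar>) ^ m"
      using poly_growth_bound_mono[of "f x" C x m m] C that by simp
    also have "\<dots> \<le> \<bar>C\<bar> * (real m ^ m * exp (a * (d + x)) / a ^ m)"
      using growth by (rule mult_left_mono) simp
    finally have "\<bar>f x\<bar> * exp (- a * x) \<le> \<bar>C\<bar> * (real m ^ m * exp (a * (d + x)) / a ^ m) * exp (- a * x)"
      by (intro mult_right_mono) auto
    also have "\<dots> = \<bar>C\<bar> * (real m ^ m / a ^ m) * exp (a * d)"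
      by (simp add: mult_exp_exp algebra_simps)
    finally show ?thesis .
  qed
  then show ?thesis by blast
qed

section \<open>Polynomials times exponentials\<close>

lemma poly_first_order_ode_solvable:
  fixes lam :: real and q :: "real poly"
  assumes "lam \<noteq> 0"
  shows "\<exists>R. smult lam R - pderiv R = q"
proof (induction "degree q" arbitrary: q)
  case 0
  then have "pderiv q = 0" by (simp add: pderiv_eq_0_iff)
  then show ?case using assms by (intro exI[of _ "smult (1 / lam) q"]) (simp add: pderiv_smult)
next
  case (Suc n)
  have "n = degree (smult (1 / lam) (pderiv q))"
    using Suc.hyps(2) assms by (simp add: degree_pderiv)
  then obtain R where R: "smult lam R - pderiv R = smult (1 / lam) (pderiv q)"
    using Suc.hyps(1) by blast
  have "smult lam (smult (1 / lam) q + R) - pderiv (smult (1 / lam) q + R) = q"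
    using assms R by (simp add: pderiv_add pderiv_smult smult_add_right algebra_simps)
  then show ?case by blast
qed

lemma has_real_derivative_poly_exp:
  "((\<lambda>y. poly R y * exp (- lam * y)) has_real_derivative
     poly (pderiv R - smult lam R) x * exp (- lam * x)) (at x)"
  by (auto intro!: derivative_eq_intros simp: algebra_simps)

lemma tendsto_poly_exp_at_top:
  fixes lam :: real
  assumes "lam > 0"
  shows "((\<lambda>y. poly R y * exp (- lam * y)) \<longlongrightarrow> 0) at_top"
proof -
  obtain K where K: "\<forall>y\<in>{0..}. \<bar>poly R y\<bar> * exp (- (lam / 2) * y) \<le> K"
    using poly_growth_on_exp_decay[of "{0..}" "poly R" 0 "lam / 2"] poly_growth_on_poly assms
    by (metis order_refl half_gt_zero)
  have "eventually (\<lambda>y. norm (poly R y * exp (- lam * y)) \<le> K * exp (- (lam / 2) * y)) at_top"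
  proof (rule eventually_at_top_linorderI[of 0])
    fix y :: real assume "y \<ge> 0"
    have "norm (poly R y * exp (- lam * y)) = (\<bar>poly R y\<bar> * exp (- (lam / 2) * y)) * exp (- (lam / 2) * y)"
      by (simp add: abs_mult mult_exp_exp)
    also have "\<dots> \<le> K * exp (- (lam / 2) * y)" using K \<open>y \<ge> 0\<close> by (intro mult_right_mono) auto
    finally show "norm (poly R y * exp (- lam * y)) \<le> K * exp (- (lam / 2) * y)" .
  qed
  moreover have "((\<lambda>y. K * exp (- (lam / 2) * y)) \<longlongrightarrow> 0) at_top"
    using assms by real_asymp
  ultimately show ?thesis by (rule Lim_null_comparison)
qed

lemma set_integral_atLeast_FTC:
  fixes f F :: "real \<Rightarrow> real"
  assumes "set_integrable lborel {a..} f"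
    and "\<And>x. (F has_real_derivative f x) (at x)" "\<And>x. isCont f x"
    and "(F \<longlongrightarrow> 0) at_top"
  shows "(LBINT x:{a..}. f x) = - F a"
proof -
  have "((\<lambda>b. F b - F a) \<longlongrightarrow> 0 - F a) at_top"
    by (intro tendsto_intros assms(4))
  moreover have "eventually (\<lambda>b. F b - F a = (LBINT x:{a..b}. f x)) at_top"
  proof (rule eventually_at_top_linorderI[of a])
    fix b assume "a \<le> b"
    have "(\<integral>x. f x * indicator {a..b} x \<partial>lborel) = F b - F a"
      by (rule integral_FTC_Icc_real[OF \<open>a \<le> b\<close>]) (auto intro: assms(2,3))
    then show "F b - F a = (LBINT x:{a..b}. f x)"
      by (simp add: set_lebesgue_integral_def mult.commute)
  qed
  ultimately have "((\<lambda>b. LBINT x:{a..b}. f x) \<longlongrightarrow> 0 - F a) at_top"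
    by (rule Lim_transform_eventually)
  moreover have "((\<lambda>b. LBINT x:{a..b}. f x) \<longlongrightarrow> (LBINT x:{a..}. f x)) at_top"
    by (rule tendsto_set_lebesgue_integral_at_top[OF _ assms(1)]) auto
  ultimately show ?thesis using tendsto_unique[OF trivial_limit_at_top_linorder] by fastforce
qed

lemma set_integral_poly_exp:
  fixes lam :: real
  assumes "lam > 0"
    and "set_integrable lborel {c..} (\<lambda>x. poly (smult lam R - pderiv R) x * exp (- lam * x))"
  shows "(LBINT x:{c..}. poly (smult lam R - pderiv R) x * exp (- lam * x)) = poly R c * exp (- lam * c)"
proof -
  have "pderiv (- R) - smult lam (- R) = smult lam R - pderiv R"
    by (simp add: pderiv_minus)
  then have "(LBINT x:{c..}. poly (smult lam R - pderiv R) x * exp (- lam * x))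
      = - (poly (- R) c * exp (- lam * c))"
    using has_real_derivative_poly_exp[of "- R" lam] tendsto_poly_exp_at_top[OF assms(1), of "- R"]
    by (intro set_integral_atLeast_FTC assms(2)) (auto intro: continuous_intros)
  then show ?thesis by simp
qed

lemma has_real_derivative_le_imp_diff_le:
  fixes f g :: "real \<Rightarrow> real"
  assumes "a \<le> b"
    and "\<And>x. x \<in> {a..b} \<Longrightarrow> (f has_real_derivative f' x) (at x)"
    and "\<And>x. x \<in> {a..b} \<Longrightarrow> (g has_real_derivative g' x) (at x)"
    and "\<And>x. x \<in> {a..b} \<Longrightarrow> f' x \<le> g' x"
  shows "f b - f a \<le> g b - g a"
proof -
  have "g a - f a \<le> g b - f b"
    by (rule deriv_nonneg_imp_mono[of a b _ "\<lambda>x. g' x - f' x"]) (use assms in \<open>auto intro: DERIV_diff\<close>)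
  then show ?thesis by simp
qed

lemma DERIV_DERIV_zero_imp_affine:
  fixes f f' :: "real \<Rightarrow> real"
  assumes "\<And>x. x > c \<Longrightarrow> (f has_real_derivative f' x) (at x)"
    and "\<And>x. x > c \<Longrightarrow> (f' has_real_derivative 0) (at x)"
  obtains \<alpha> \<beta> where "\<And>x. x > c \<Longrightarrow> f x = \<alpha> * x + \<beta>"
proof -
  obtain \<alpha> where \<alpha>: "\<And>x. x > c \<Longrightarrow> f' x = \<alpha>"
    using has_field_derivative_0_imp_constant_on[of "{c<..}" f'] assms(2)
    by (auto simp: constant_on_def)
  have "((\<lambda>x. f x - \<alpha> * x) has_real_derivative 0) (at x)" if "x > c" for x
    using DERIV_diff[OF assms(1)[OF that] DERIV_cmult[OF DERIV_ident, of \<alpha>]] \<alpha>[OF that] by simp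
  then obtain \<beta> where "\<And>x. x > c \<Longrightarrow> f x - \<alpha> * x = \<beta>"
    using has_field_derivative_0_imp_constant_on[of "{c<..}" "\<lambda>x. f x - \<alpha> * x"]
    by (auto simp: constant_on_def)
  then show ?thesis by (intro that[of \<alpha> \<beta>]) (simp add: algebra_simps)
qed

lemma affine_vanishing_to_first_order:
  fixes f :: "real \<Rightarrow> real"
  assumes affine: "\<And>x. x > c \<Longrightarrow> f x = \<alpha> * x + \<beta>"
    and lim: "((\<lambda>x. f x / (x - c)) \<longlongrightarrow> 0) (at_right c)"
  shows "\<alpha> = 0" "\<beta> = 0"
proof -
  have ev: "eventually (\<lambda>x. x > c) (at_right c)" by (rule eventually_at_right_less)
  have "((\<lambda>x. f x / (x - c) * (x - c)) \<longlongrightarrow> 0) (at_right c)"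
    using tendsto_mult[OF lim tendsto_diff[OF tendsto_ident_at tendsto_const[of c]]] by simp
  then have "(f \<longlongrightarrow> 0) (at_right c)"
    by (rule Lim_transform_eventually) (rule eventually_mono[OF ev], simp)
  moreover have "(f \<longlongrightarrow> \<alpha> * c + \<beta>) (at_right c)"
  proof (rule Lim_transform_eventually)
    show "((\<lambda>x. \<alpha> * x + \<beta>) \<longlongrightarrow> \<alpha> * c + \<beta>) (at_right c)"
      by (intro tendsto_intros)
    show "eventually (\<lambda>x. \<alpha> * x + \<beta> = f x) (at_right c)"
      by (rule eventually_mono[OF ev]) (simp add: affine)
  qed
  ultimately have at_c: "\<alpha> * c + \<beta> = 0"
    using tendsto_unique[OF trivial_limit_at_right_real] by blast
  have "((\<lambda>x. f x / (x - c)) \<longlongrightarrow> \<alpha>) (at_right c)"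
  proof (rule Lim_transform_eventually[OF tendsto_const], rule eventually_mono[OF ev])
    fix x assume "c < x"
    then show "\<alpha> = f x / (x - c)" using affine[of x] at_c by (simp add: field_simps)
  qed
  with lim show "\<alpha> = 0" using tendsto_unique[OF trivial_limit_at_right_real] by blast
  with at_c show "\<beta> = 0" by simp
qed

lemma deriv_bounds_near_endpoint_of_deriv2_le_inverse:
  fixes u1 u2 :: "real \<Rightarrow> real"
  assumes d2: "\<And>y. -1 < y \<Longrightarrow> (u1 has_real_derivative u2 y) (at y)"
    and u2: "\<And>y. -1 < y \<Longrightarrow> y \<le> 0 \<Longrightarrow> 0 < u2 y \<and> u2 y \<le> K / (y + 1)"
    and y: "-1 < y" "y \<le> 0"
  shows "u1 y \<le> u1 0" "u1 0 + K * ln (y + 1) \<le> u1 y"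
proof -
  have t: "-1 < t" "t \<le> 0" if "t \<in> {y..0}" for t using that y by auto
  have "0 - 0 \<le> u1 0 - u1 y"
  proof (rule has_real_derivative_le_imp_diff_le[of y 0 "\<lambda>_. 0" "\<lambda>_. 0" u1 u2])
    fix t assume "t \<in> {y..0}"
    show "((\<lambda>_. 0) has_real_derivative 0) (at t)" by simp
    show "(u1 has_real_derivative u2 t) (at t)" using d2 t[OF \<open>t \<in> {y..0}\<close>] by simp
    show "0 \<le> u2 t" using u2[OF t[OF \<open>t \<in> {y..0}\<close>]] by simp
  qed (use y in simp)
  then show "u1 y \<le> u1 0" by simp
  have "u1 0 - u1 y \<le> K * ln (0 + 1) - K * ln (y + 1)"
  proof (rule has_real_derivative_le_imp_diff_le[of y 0 u1 u2 _ "\<lambda>t. K / (t + 1)"])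
    fix t assume "t \<in> {y..0}"
    then have t: "-1 < t" "t \<le> 0" by (rule t)+
    show "(u1 has_real_derivative u2 t) (at t)" using d2 t by simp
    show "((\<lambda>t. K * ln (t + 1)) has_real_derivative K / (t + 1)) (at t)"
      using t by (auto intro!: derivative_eq_intros)
    show "u2 t \<le> K / (t + 1)" using u2[OF t] by simp
  qed (use y in simp)
  then show "u1 0 + K * ln (y + 1) \<le> u1 y" by simp
qed

lemma bounded_near_endpoint_of_deriv2_le_inverse:
  fixes u u1 u2 :: "real \<Rightarrow> real"
  assumes d1: "\<And>y. -1 < y \<Longrightarrow> (u has_real_derivative u1 y) (at y)"
    and d2: "\<And>y. -1 < y \<Longrightarrow> (u1 has_real_derivative u2 y) (at y)"
    and u2: "\<And>y. -1 < y \<Longrightarrow> y \<le> 0 \<Longrightarrow> 0 < u2 y \<and> u2 y \<le> K / (y + 1)"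
  shows "\<exists>B. \<forall>y\<in>{-1<..0}. \<bar>u y\<bar> \<le> B"
proof -
  have slope: "u1 t \<le> u1 0" "u1 0 + K * ln (t + 1) \<le> u1 t" if "-1 < t" "t \<le> 0" for t
    using deriv_bounds_near_endpoint_of_deriv2_le_inverse[of u1 u2 K t] d2 u2 that by blast+
  have K: "K \<ge> 0" using u2[of 0] by simp
  \<comment> \<open>\<open>L' t = ln (t + 1)\<close>, and \<open>L\<close> stays bounded as \<open>t \<rightarrow> -1\<close>.\<close>
  define L where "L t = (t + 1) * ln (t + 1) - (t + 1)" for t :: real
  have "\<bar>u x\<bar> \<le> \<bar>u 0\<bar> + \<bar>u1 0\<bar> + K" if x: "-1 < x" "x \<le> 0" for x
  proof -
    have t: "-1 < t" "t \<le> 0" if "t \<in> {x..0}" for t using that x by auto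
    have lower: "u 0 - u x \<le> u1 0 * 0 - u1 0 * x"
    proof (rule has_real_derivative_le_imp_diff_le[of x 0 u u1 _ "\<lambda>_. u1 0"])
      fix t assume "t \<in> {x..0}"
      then have t: "-1 < t" "t \<le> 0" by (rule t)+
      show "(u has_real_derivative u1 t) (at t)" using d1 t by simp
      show "((\<lambda>t. u1 0 * t) has_real_derivative u1 0) (at t)"
        by (auto intro!: derivative_eq_intros)
      show "u1 t \<le> u1 0" using slope(1)[OF t] .
    qed (use x in simp)
    have upper: "(u1 0 * 0 + K * L 0) - (u1 0 * x + K * L x) \<le> u 0 - u x"
    proof (rule has_real_derivative_le_imp_diff_le[of x 0 _ "\<lambda>t. u1 0 + K * ln (t + 1)" u u1])
      fix t assume "t \<in> {x..0}"
      then have t: "-1 < t" "t \<le> 0" by (rule t)+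
      show "(u has_real_derivative u1 t) (at t)" using d1 t by simp
      show "((\<lambda>t. u1 0 * t + K * L t) has_real_derivative u1 0 + K * ln (t + 1)) (at t)"
        unfolding L_def using t by (auto intro!: derivative_eq_intros)
      show "u1 0 + K * ln (t + 1) \<le> u1 t" using slope(2)[OF t] .
    qed (use x in simp)
    have "(x + 1) * ln (x + 1) \<le> 0"
      using x by (intro mult_nonneg_nonpos) auto
    then have "L x \<le> 0" using x unfolding L_def by linarith
    then have "K * L x \<le> 0" using K by (simp add: mult_nonneg_nonpos)
    moreover have "\<bar>x\<bar> \<le> 1" using x by simp
    then have "\<bar>u1 0 * x\<bar> \<le> \<bar>u1 0\<bar>" by (simp add: abs_mult mult_left_le)
    moreover have "L 0 = -1" by (simp add: L_def)
    ultimately show ?thesis using lower upper K by (simp add: abs_le_iff) linarith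
  qed
  then show ?thesis by (intro exI[of _ "\<bar>u 0\<bar> + \<bar>u1 0\<bar> + K"]) auto
qed

section \<open>The profile is rational\<close>

lemma futaki_affine_moments:
  fixes v w :: "real \<Rightarrow> real"
  assumes F_affine: "\<forall>a b. futaki v w (\<lambda>x. a * x + b) = 0" and v: "v (-1) \<noteq> 0"
  shows "set_integrable lborel {-1..} w" "(LBINT x:{-1..}. w x) = 2 * v (-1)"
    and "set_integrable lborel {-1..} (\<lambda>x. x * w x)" "(LBINT x:{-1..}. x * w x) = - 2 * v (-1)"
proof -
  have zero_if_not_integrable: "(LBINT x:{-1..}. f x) = 0" if "\<not> set_integrable lborel {-1..} f"
    for f :: "real \<Rightarrow> real"
    using that unfolding set_lebesgue_integral_def set_integrable_def
    by (simp add: not_integrable_integral_eq)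
  show int0: "(LBINT x:{-1..}. w x) = 2 * v (-1)"
    using F_affine[rule_format, of 0 1] unfolding futaki_def by simp
  show int1: "(LBINT x:{-1..}. x * w x) = - 2 * v (-1)"
    using F_affine[rule_format, of 1 0] unfolding futaki_def by simp
  \<comment> \<open>A non-integrable function has integral 0, while both moments are nonzero.\<close>
  show "set_integrable lborel {-1..} w"
    using zero_if_not_integrable[of w] int0 v by auto
  show "set_integrable lborel {-1..} (\<lambda>x. x * w x)"
    using zero_if_not_integrable[of "\<lambda>x. x * w x"] int1 v by auto
qed

lemma poly_exp_moments:
  fixes lam :: real and q S T :: "real poly"
  assumes lam: "lam > 0"
    and S: "smult lam S - pderiv S = q" and T: "smult lam T - pderiv T = S"
    and int0: "set_integrable lborel {-1..} (\<lambda>x. poly q x * exp (- lam * x))"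
    and int1: "set_integrable lborel {-1..} (\<lambda>x. x * (poly q x * exp (- lam * x)))"
  shows "(LBINT x:{-1..}. poly q x * exp (- lam * x)) = poly S (-1) * exp lam"
    and "(LBINT x:{-1..}. x * (poly q x * exp (- lam * x))) = (poly T (-1) - poly S (-1)) * exp lam"
proof -
  show "(LBINT x:{-1..}. poly q x * exp (- lam * x)) = poly S (-1) * exp lam"
    using set_integral_poly_exp[OF lam, of "-1" S] int0 S by simp
  have "smult lam ([:0, 1:] * S + T) - pderiv ([:0, 1:] * S + T) = [:0, 1:] * q"
    using S T by (simp add: pderiv_add pderiv_mult pderiv_pCons smult_add_right algebra_simps)
  then show "(LBINT x:{-1..}. x * (poly q x * exp (- lam * x))) = (poly T (-1) - poly S (-1)) * exp lam"
    using set_integral_poly_exp[OF lam, of "-1" "[:0, 1:] * S + T"] int1 by (simp add: mult.assoc)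
qed

lemma futaki_poly_exp_primitives:
  fixes v w :: "real \<Rightarrow> real" and q :: "real poly" and lam :: real
  assumes lam: "lam > 0" and w_def: "w = (\<lambda>x. poly q x * exp (- lam * x))"
    and F_affine: "\<forall>a b. futaki v w (\<lambda>x. a * x + b) = 0" and v: "v (-1) \<noteq> 0"
  obtains S T where "smult lam S - pderiv S = q" "smult lam T - pderiv T = S"
    and "poly S (-1) * exp lam = 2 * v (-1)" "poly T (-1) = 0"
proof -
  have solvable: "\<exists>R. smult lam R - pderiv R = r" for r
    using poly_first_order_ode_solvable lam by simp
  obtain S T where S: "smult lam S - pderiv S = q" and T: "smult lam T - pderiv T = S"
    using solvable by meson
  note moments = futaki_affine_moments[OF F_affine v, unfolded w_def]
  note poly_moments = poly_exp_moments[OF lam S T moments(1,3)]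
  have "poly S (-1) * exp lam = 2 * v (-1)"
    using moments(2) poly_moments(1) by simp
  moreover have "poly T (-1) = 0"
    using moments(4) poly_moments(2) calculation by (simp add: algebra_simps)
  ultimately show ?thesis using S T that by blast
qed

lemma cscK_profile_weighted_derivatives:
  fixes v v' w H :: "real \<Rightarrow> real"
  assumes H: "cscK_profile v w H"
    and v: "\<And>x. x > -1 \<Longrightarrow> (v has_real_derivative v' x) (at x)"
      "\<And>x. x > -1 \<Longrightarrow> v' differentiable at x"
  obtains \<Psi> where "\<And>x. x > -1 \<Longrightarrow> ((\<lambda>y. v y * H y) has_real_derivative \<Psi> x) (at x)"
    and "\<And>x. x > -1 \<Longrightarrow> (\<Psi> has_real_derivative - w x) (at x)"
proof
  define \<Psi> where "\<Psi> y = v' y * H y + deriv H y * v y" for y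
  have H_diff: "H differentiable at x" "deriv H differentiable at x"
    and ode: "- deriv (deriv (\<lambda>y. v y * H y)) x = w x" if "x > -1" for x
    using H that unfolding cscK_profile_def by blast+
  show \<Psi>: "((\<lambda>y. v y * H y) has_real_derivative \<Psi> x) (at x)" if "x > -1" for x
    unfolding \<Psi>_def using v(1)[OF that] H_diff(1)[OF that]
    by (intro DERIV_mult) (auto simp: DERIV_deriv_iff_real_differentiable)
  fix x :: real assume x: "x > -1"
  have "\<Psi> differentiable at x"
    unfolding \<Psi>_def using v[OF x] H_diff[OF x]
    by (intro differentiable_add differentiable_mult) (auto simp: real_differentiable_def)
  moreover have "deriv (deriv (\<lambda>y. v y * H y)) x = deriv \<Psi> x"
  proof (rule deriv_cong_ev[OF _ refl])
    have "eventually (\<lambda>y. y \<in> {-1<..}) (nhds x)"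
      using x by (intro eventually_nhds_in_open) auto
    then show "eventually (\<lambda>y. deriv (\<lambda>y. v y * H y) y = \<Psi> y) (nhds x)"
      by (rule eventually_mono) (auto intro: DERIV_imp_deriv \<Psi>)
  qed
  ultimately show "(\<Psi> has_real_derivative - w x) (at x)"
    using ode[OF x] by (metis DERIV_deriv_iff_real_differentiable minus_minus)
qed

lemma cscK_profile_unique:
  fixes v v' w H G G' :: "real \<Rightarrow> real"
  assumes H: "cscK_profile v w H"
    and v: "\<And>x. x > -1 \<Longrightarrow> (v has_real_derivative v' x) (at x)"
      "\<And>x. x > -1 \<Longrightarrow> v' differentiable at x"
    and v_lim: "(v \<longlongrightarrow> v (-1)) (at_right (-1))"
    and G: "\<And>x. x \<ge> -1 \<Longrightarrow> (G has_real_derivative G' x) (at x)"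
      "\<And>x. x > -1 \<Longrightarrow> (G' has_real_derivative - w x) (at x)"
    and G_boundary: "G (-1) = 0" "G' (-1) = 2 * v (-1)"
    and x: "x > -1"
  shows "v x * H x = G x"
proof -
  obtain \<Psi> where \<Psi>: "\<And>x. x > -1 \<Longrightarrow> ((\<lambda>y. v y * H y) has_real_derivative \<Psi> x) (at x)"
    "\<And>x. x > -1 \<Longrightarrow> (\<Psi> has_real_derivative - w x) (at x)"
    using cscK_profile_weighted_derivatives[OF H v] by blast
  define \<Phi> where "\<Phi> y = v y * H y - G y" for y
  have "(\<Phi> has_real_derivative \<Psi> x - G' x) (at x)"
    and "((\<lambda>y. \<Psi> y - G' y) has_real_derivative 0) (at x)" if "x > -1" for x
    unfolding \<Phi>_def using DERIV_diff[OF \<Psi>(1) G(1)] DERIV_diff[OF \<Psi>(2) G(2)] that by simp_all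
  then obtain \<alpha> \<beta> where affine: "\<And>x. x > -1 \<Longrightarrow> \<Phi> x = \<alpha> * x + \<beta>"
    using DERIV_DERIV_zero_imp_affine[of "-1" \<Phi> "\<lambda>y. \<Psi> y - G' y"] by blast
  have H_boundary: "H (-1) = 0" "(H has_real_derivative 2) (at (-1) within {-1..})"
    using H unfolding cscK_profile_def by auto
  have "((\<lambda>y. v y * ((H y - H (-1)) / (y - -1)) - (G y - G (-1)) / (y - -1))
      \<longlongrightarrow> v (-1) * 2 - G' (-1)) (at_right (-1))"
  proof (intro tendsto_intros v_lim)
    show "((\<lambda>y. (H y - H (-1)) / (y - -1)) \<longlongrightarrow> 2) (at_right (-1))"
      using H_boundary(2) unfolding has_field_derivative_iff by (rule tendsto_within_subset) auto
    show "((\<lambda>y. (G y - G (-1)) / (y - -1)) \<longlongrightarrow> G' (-1)) (at_right (-1))"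
      using G(1)[of "-1"] unfolding has_field_derivative_iff by (rule tendsto_within_subset) auto
  qed
  then have "((\<lambda>y. \<Phi> y / (y - -1)) \<longlongrightarrow> 0) (at_right (-1))"
    by (simp add: \<Phi>_def H_boundary(1) G_boundary diff_divide_distrib)
  then have "\<alpha> = 0" "\<beta> = 0"
    using affine_vanishing_to_first_order[of "-1" \<Phi> \<alpha> \<beta>] affine by auto
  then show ?thesis using affine[OF x] by (simp add: \<Phi>_def)
qed

lemma rational_exp_derivatives:
  fixes a b :: "real poly" and v :: "real \<Rightarrow> real" and c :: real
  assumes U: "open U" and b: "\<And>x. x \<in> U \<Longrightarrow> poly b x \<noteq> 0"
    and v: "\<And>x. x \<in> U \<Longrightarrow> v x = poly a x / poly b x * exp (c * x)"
  obtains v' where "\<And>x. x \<in> U \<Longrightarrow> (v has_real_derivative v' x) (at x)"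
    and "\<And>x. x \<in> U \<Longrightarrow> v' differentiable at x"
proof
  define v' where "v' y = (poly (pderiv a * b - a * pderiv b) y / poly (b * b) y
      + c * (poly a y / poly b y)) * exp (c * y)" for y
  fix x assume x: "x \<in> U"
  have "((\<lambda>y. exp (c * y)) has_real_derivative exp (c * x) * c) (at x)"
    by (auto intro!: derivative_eq_intros)
  from DERIV_mult[OF has_real_derivative_rational[OF b[OF x]] this]
  have "((\<lambda>y. poly a y / poly b y * exp (c * y)) has_real_derivative v' x) (at x)"
    by (simp add: v'_def algebra_simps)
  then show "(v has_real_derivative v' x) (at x)"
    by (rule has_field_derivative_transform_within_open[OF _ U x]) (simp add: v)
  have "poly (b * b) x \<noteq> 0" using b[OF x] by simp
  then have "\<exists>D. (v' has_real_derivative D) (at x)"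
    unfolding v'_def using b[OF x] by (intro exI) (auto intro!: derivative_eq_intros)
  then show "v' differentiable at x" by (simp add: real_differentiable_def)
qed

lemma tendsto_at_right_rational_exp:
  fixes a b :: "real poly" and v :: "real \<Rightarrow> real"
  assumes "poly b c \<noteq> 0" and v: "\<And>x. x \<ge> c \<Longrightarrow> v x = poly a x / poly b x * exp (k * x)"
  shows "(v \<longlongrightarrow> v c) (at_right c)"
proof -
  have "isCont (\<lambda>x. poly a x / poly b x * exp (k * x)) c"
    using assms(1) by (intro continuous_intros) auto
  then have "((\<lambda>x. poly a x / poly b x * exp (k * x)) \<longlongrightarrow> v c) (at_right c)"
    using v[of c] by (simp add: isCont_def filterlim_at_split)
  then show ?thesis
    by (rule Lim_transform_eventually) (rule eventually_mono[OF eventually_at_right_less], simp add: v)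
qed

lemma cscK_profile_weighted_eq_poly_exp:
  fixes q a b :: "real poly" and lam :: real and v w H :: "real \<Rightarrow> real"
  assumes b: "\<And>x. x \<ge> -1 \<Longrightarrow> poly b x \<noteq> 0"
    and v_rat: "\<And>x. x \<ge> -1 \<Longrightarrow> v x = poly a x / poly b x * exp (- lam * x)"
    and v: "v (-1) \<noteq> 0"
    and lam: "lam > 0"
    and w_def: "w = (\<lambda>x. poly q x * exp (- lam * x))"
    and F_affine: "\<forall>a b. futaki v w (\<lambda>x. a * x + b) = 0"
    and H: "cscK_profile v w H"
  obtains T where "poly T (-1) = 0" "\<And>x. x > -1 \<Longrightarrow> v x * H x = poly T x * exp (- lam * x)"
proof -
  obtain S T where S: "smult lam S - pderiv S = q" and T: "smult lam T - pderiv T = S"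
    and S_boundary: "poly S (-1) * exp lam = 2 * v (-1)" and T_boundary: "poly T (-1) = 0"
    using futaki_poly_exp_primitives[OF lam w_def F_affine v] by blast
  define G where "G y = poly (- T) y * exp (- lam * y)" for y
  define G' where "G' y = poly S y * exp (- lam * y)" for y
  have G: "(G has_real_derivative G' x) (at x)" for x
    using has_real_derivative_poly_exp[of "- T" lam x] T
    unfolding G_def G'_def by (simp add: pderiv_minus)
  have G': "(G' has_real_derivative - w x) (at x)" for x
  proof -
    have "pderiv S - smult lam S = - q" using S by (simp add: algebra_simps)
    then show ?thesis
      using has_real_derivative_poly_exp[of S lam x] unfolding G'_def w_def by simp
  qed
  obtain v' where v': "\<And>x. x \<in> {-1<..} \<Longrightarrow> (v has_real_derivative v' x) (at x)"
    "\<And>x. x \<in> {-1<..} \<Longrightarrow> v' differentiable at x"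
    by (rule rational_exp_derivatives[of "{-1<..}" b v a "- lam"]) (use b v_rat in auto)
  have "v x * H x = G x" if "x > -1" for x
    by (rule cscK_profile_unique[OF H v'[simplified] tendsto_at_right_rational_exp[OF b v_rat] G G' _ _ that])
      (simp_all add: b v_rat G_def G'_def S_boundary T_boundary)
  then show ?thesis
    using that[of "- T"] T_boundary by (simp add: G_def)
qed

lemma cscK_profile_rational:
  fixes p :: "real \<Rightarrow> real" and q a b :: "real poly" and lam :: real and v w H :: "real \<Rightarrow> real"
  assumes pab: "\<forall>x\<in>{-1..}. poly b x \<noteq> 0 \<and> p x = poly a x / poly b x"
    and ppos: "\<forall>x\<in>{-1..}. p x > 0"
    and lam: "lam > 0"
    and v_def: "v = (\<lambda>x. p x * exp (- lam * x))"
    and w_def: "w = (\<lambda>x. poly q x * exp (- lam * x))"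
    and F_affine: "\<forall>a b. futaki v w (\<lambda>x. a * x + b) = 0"
    and H: "cscK_profile v w H"
  shows "\<exists>N D. (\<forall>x\<ge>-1. poly D x \<noteq> 0) \<and> (\<forall>x\<ge>-1. H x = poly N x / poly D x)"
proof -
  have b: "poly b x \<noteq> 0" and a: "poly a x \<noteq> 0" if "x \<ge> -1" for x
  proof -
    have "poly b x \<noteq> 0 \<and> p x = poly a x / poly b x" "p x > 0" using pab ppos that by auto
    then show "poly b x \<noteq> 0" "poly a x \<noteq> 0" by auto
  qed
  have v_rat: "v x = poly a x / poly b x * exp (- lam * x)" if "x \<ge> -1" for x
    using pab that by (simp add: v_def)
  have "v (-1) \<noteq> 0" using ppos[rule_format, of "-1"] unfolding v_def by simp
  then obtain T where T_boundary: "poly T (-1) = 0"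
    and vH: "\<And>x. x > -1 \<Longrightarrow> v x * H x = poly T x * exp (- lam * x)"
    using cscK_profile_weighted_eq_poly_exp[OF b v_rat _ lam w_def F_affine H] by blast
  have "H x = poly (T * b) x / poly a x" if x: "x \<ge> -1" for x
  proof (cases "x = -1")
    case True
    then show ?thesis using H T_boundary unfolding cscK_profile_def by simp
  next
    case False
    then have "(H x * poly a x) * exp (- lam * x) = (poly T x * poly b x) * exp (- lam * x)"
      using vH[of x] v_rat[of x] x b[OF x] by (simp add: field_simps)
    then have "H x * poly a x = poly T x * poly b x"
      by (metis exp_not_eq_zero mult_cancel_right)
    then show ?thesis using a[OF x] by (simp add: field_simps)
  qed
  then show ?thesis using a by blast
qed

section \<open>Weighted bounds\<close>

lemma weighted_bounded_of_poly_growth: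
  fixes p v f :: "real \<Rightarrow> real" and lam eps :: real
  assumes p: "poly_growth_on {-1..} p" "\<forall>x\<in>{-1..}. p x > 0"
    and lam: "lam > 0" and v_def: "v = (\<lambda>x. p x * exp (- lam * x))"
    and eps: "0 < eps" "eps \<le> 1"
    and f: "poly_growth_on S f" "S \<subseteq> {-1..}"
  shows "\<exists>C. \<forall>x\<in>S. \<bar>v x powr eps * f x\<bar> \<le> C"
proof -
  have "poly_growth_on S (\<lambda>x. (1 + p x) * f x)"
    using poly_growth_on_mult[OF poly_growth_on_add[OF poly_growth_on_bounded[of S "\<lambda>_. 1" 1]
          poly_growth_on_subset[OF p(1) f(2)]] f(1)] by simp
  then obtain K where K: "\<forall>x\<in>S. \<bar>(1 + p x) * f x\<bar> * exp (- (eps * lam) * x) \<le> K"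
    using poly_growth_on_exp_decay[OF _ f(2), of _ "eps * lam"] eps lam by force
  have "\<bar>v x powr eps * f x\<bar> \<le> K" if x: "x \<in> S" for x
  proof -
    have px: "p x > 0" using p(2) x f(2) by auto
    have "p x powr eps \<le> 1 + p x"
    proof (cases "p x \<le> 1")
      case True
      then have "p x powr eps \<le> 1" using px eps by (intro powr_le1) auto
      then show ?thesis using px by simp
    next
      case False
      then have "p x powr eps \<le> p x powr 1" using eps by (intro powr_mono) auto
      then show ?thesis using px by simp
    qed
    moreover have "v x powr eps = p x powr eps * exp (- (eps * lam) * x)"
      using px by (simp add: v_def powr_mult exp_powr_real algebra_simps)
    ultimately have "\<bar>v x powr eps * f x\<bar> \<le> \<bar>(1 + p x) * f x\<bar> * exp (- (eps * lam) * x)"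
      using px unfolding abs_mult by (simp add: mult_ac mult_left_mono mult_right_mono)
    then show ?thesis using K x by fastforce
  qed
  then show ?thesis by blast
qed

lemma rational_inverse_bound_near_simple_zero:
  fixes H :: "real \<Rightarrow> real" and N D :: "real poly"
  assumes D: "\<forall>x\<ge>-1. poly D x \<noteq> 0" and HND: "\<forall>x\<ge>-1. H x = poly N x / poly D x"
    and Hpos: "\<forall>x>-1. H x > 0" and H0: "H (-1) = 0"
    and Hd: "(H has_real_derivative d) (at (-1) within {-1..})" "d > 0"
  shows "\<exists>K. \<forall>y. -1 < y \<and> y \<le> 0 \<longrightarrow> 1 / H y \<le> K / (y + 1)"
proof -
  have "poly N (-1) = 0" using HND H0 D by auto
  then obtain N' where N': "N = [:1, 1:] * N'"
    by (metis dvdE minus_minus poly_eq_0_iff_dvd)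
  define g where "g y = poly N' y / poly D y" for y
  have Hg: "H y = (y + 1) * g y" if "y \<ge> -1" for y
    using HND that by (simp add: N' g_def algebra_simps)
  have g_pos: "g y > 0" if "-1 < y" for y
  proof -
    have "0 < H y" using Hpos that by blast
    then have "0 < (y + 1) * g y" using Hg[of y] that by simp
    then show ?thesis using that by (simp add: zero_less_mult_iff)
  qed
  have g_cont: "continuous_on {-1..0} g"
    unfolding g_def using D by (intro continuous_intros) auto
  have "((\<lambda>y. (H y - H (-1)) / (y - -1)) \<longlongrightarrow> d) (at_right (-1))"
    using Hd(1) unfolding has_field_derivative_iff by (rule tendsto_within_subset) auto
  then have "(g \<longlongrightarrow> d) (at_right (-1))"
    by (rule Lim_transform_eventually) (rule eventually_mono[OF eventually_at_right_less],
        simp add: Hg H0)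
  moreover have "isCont g (-1)"
    unfolding g_def using D by (intro continuous_intros) auto
  then have "(g \<longlongrightarrow> g (-1)) (at_right (-1))"
    by (simp add: isCont_def filterlim_at_split)
  ultimately have "g (-1) = d"
    using tendsto_unique[OF trivial_limit_at_right_real] by blast
  obtain x0 where x0: "x0 \<in> {-1..0}" "\<forall>y\<in>{-1..0}. g x0 \<le> g y"
    using continuous_attains_inf[OF compact_Icc _ g_cont] by auto
  have "g x0 > 0" using x0(1) g_pos \<open>g (-1) = d\<close> Hd(2) by (cases "x0 = -1") auto
  have "1 / H y \<le> (1 / g x0) / (y + 1)" if y: "-1 < y" "y \<le> 0" for y
  proof -
    have "(y + 1) * g x0 \<le> (y + 1) * g y" using x0(2) y by (intro mult_left_mono) auto
    then have "1 / ((y + 1) * g y) \<le> 1 / ((y + 1) * g x0)"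
      using y \<open>g x0 > 0\<close> by (intro divide_left_mono) auto
    then show ?thesis using Hg[of y] y by (simp add: mult.commute)
  qed
  then show ?thesis by blast
qed

lemma symp_potential_poly_growth:
  fixes H u :: "real \<Rightarrow> real" and N D :: "real poly"
  assumes D: "\<forall>x\<ge>-1. poly D x \<noteq> 0" and HND: "\<forall>x\<ge>-1. H x = poly N x / poly D x"
    and Hpos: "\<forall>x>-1. H x > 0" and H0: "H (-1) = 0"
    and Hd: "(H has_real_derivative d) (at (-1) within {-1..})" "d > 0"
    and u: "symp_potential H u"
  shows "poly_growth_on {-1<..} u"
    and "\<And>c k. c > -1 \<Longrightarrow> k \<le> 2 \<Longrightarrow> poly_growth_on {c..} ((deriv ^^ k) u)"
proof -
  have diff: "u differentiable at y" "deriv u differentiable at y"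
    and u2: "deriv (deriv u) y = 1 / H y" if "-1 < y" for y
    using u that unfolding symp_potential_def by auto
  have d1: "(u has_real_derivative deriv u y) (at y)"
    and d2: "(deriv u has_real_derivative deriv (deriv u) y) (at y)" if "-1 < y" for y
    using diff[OF that] by (simp_all add: DERIV_deriv_iff_real_differentiable)
  have growth2: "poly_growth_on {c..} (deriv (deriv u))" if "c > -1" for c
  proof (rule poly_growth_on_cong)
    have "poly N x \<noteq> 0" if "x \<ge> c" for x
    proof -
      have "H x > 0" "H x = poly N x / poly D x" using HND Hpos that \<open>c > -1\<close> by auto
      then show ?thesis by auto
    qed
    then show "poly_growth_on {c..} (\<lambda>x. poly D x / poly N x)" by (simp add: poly_growth_on_rational)
  next
    fix x assume "x \<in> {c..}"
    then show "deriv (deriv u) x = poly D x / poly N x" using that u2[of x] HND by simp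
  qed
  have growth1: "poly_growth_on {c..} (deriv u)" if "c > -1" for c
    by (rule poly_growth_on_integrate[OF d2 growth2[OF that]]) (use that in simp)
  have growth0: "poly_growth_on {c..} u" if "c > -1" for c
    by (rule poly_growth_on_integrate[OF d1 growth1[OF that]]) (use that in simp)
  show "poly_growth_on {c..} ((deriv ^^ k) u)" if "c > -1" "k \<le> 2" for c k
  proof -
    have "k = 0 \<or> k = 1 \<or> k = 2" using that(2) by auto
    then show ?thesis using growth0 growth1 growth2 that(1) by (auto simp: numeral_2_eq_2)
  qed
  obtain K where "\<forall>y. -1 < y \<and> y \<le> 0 \<longrightarrow> 1 / H y \<le> K / (y + 1)"
    using rational_inverse_bound_near_simple_zero[OF D HND Hpos H0 Hd] by blast
  then have "0 < deriv (deriv u) y \<and> deriv (deriv u) y \<le> K / (y + 1)" if "-1 < y" "y \<le> 0" for y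
    using u2[of y] Hpos that by simp
  then obtain B where "\<forall>y\<in>{-1<..0}. \<bar>u y\<bar> \<le> B"
    using bounded_near_endpoint_of_deriv2_le_inverse[OF d1 d2] by blast
  then have "poly_growth_on ({-1<..0} \<union> {0..}) u"
    by (intro poly_growth_on_Un poly_growth_on_bounded[of _ _ B] growth0) simp_all
  then show "poly_growth_on {-1<..} u" by (rule poly_growth_on_subset) auto
qed

lemma symp_potential_weighted_bounds:
  fixes p v H u :: "real \<Rightarrow> real" and N D :: "real poly" and lam eps d :: real
  assumes p: "poly_growth_on {-1..} p" "\<forall>x\<in>{-1..}. p x > 0"
    and lam: "lam > 0" and v_def: "v = (\<lambda>x. p x * exp (- lam * x))"
    and D: "\<forall>x\<ge>-1. poly D x \<noteq> 0" and HND: "\<forall>x\<ge>-1. H x = poly N x / poly D x"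
    and Hpos: "\<forall>x>-1. H x > 0" and H0: "H (-1) = 0"
    and Hd: "(H has_real_derivative d) (at (-1) within {-1..})" "d > 0"
    and eps: "0 < eps" "eps \<le> 1"
    and u: "symp_potential H u"
  shows "\<exists>C. \<forall>x\<in>{-1<..}. \<bar>v x powr eps * u x\<bar> \<le> C"
    and "\<exists>\<delta>0>0. \<forall>\<delta>. 0 < \<delta> \<and> \<delta> < \<delta>0 \<longrightarrow>
      (\<forall>k\<le>(2::nat). \<exists>C. \<forall>x\<in>{-1+\<delta>..}. \<bar>v x powr eps * (deriv ^^ k) u x\<bar> \<le> C)"
proof -
  note weighted = weighted_bounded_of_poly_growth[OF p lam v_def eps]
  note growth = symp_potential_poly_growth[OF D HND Hpos H0 Hd u]
  have "{-1<..} \<subseteq> {-1::real..}" by auto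
  then show "\<exists>C. \<forall>x\<in>{-1<..}. \<bar>v x powr eps * u x\<bar> \<le> C"
    by (rule weighted[OF growth(1)])
  show "\<exists>\<delta>0>0. \<forall>\<delta>. 0 < \<delta> \<and> \<delta> < \<delta>0 \<longrightarrow>
      (\<forall>k\<le>(2::nat). \<exists>C. \<forall>x\<in>{-1+\<delta>..}. \<bar>v x powr eps * (deriv ^^ k) u x\<bar> \<le> C)"
    using weighted[OF growth(2)] by (intro exI[of _ 1]) auto
qed

lemma rational_derivatives_on_half_line:
  fixes H :: "real \<Rightarrow> real" and N D :: "real poly"
  assumes D: "\<forall>x\<ge>-1. poly D x \<noteq> 0" and HND: "\<forall>x\<ge>-1. H x = poly N x / poly D x"
  obtains N1 D1 N2 D2 where "\<forall>x\<ge>-1. poly D1 x \<noteq> 0" "\<forall>x\<ge>-1. poly D2 x \<noteq> 0"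
    and "\<And>x. x > -1 \<Longrightarrow> deriv H x = poly N1 x / poly D1 x"
    and "\<And>x. x > -1 \<Longrightarrow> deriv (deriv H) x = poly N2 x / poly D2 x"
proof
  define N1 D1 where "N1 = pderiv N * D - N * pderiv D" and "D1 = D * D"
  show D1: "\<forall>x\<ge>-1. poly D1 x \<noteq> 0" using D by (simp add: D1_def)
  then show "\<forall>x\<ge>-1. poly (D1 * D1) x \<noteq> 0" by simp
  show H': "deriv H x = poly N1 x / poly D1 x" if "x > -1" for x
    unfolding N1_def D1_def
    by (rule deriv_rational_on_open[of "{-1<..}"]) (use HND D that in auto)
  show "deriv (deriv H) x = poly (pderiv N1 * D1 - N1 * pderiv D1) x / poly (D1 * D1) x"
    if "x > -1" for x
    by (rule deriv_rational_on_open[of "{-1<..}"]) (use H' D1 that in auto)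
qed

lemma in_H_class_of_rational_profile:
  fixes p v H :: "real \<Rightarrow> real" and N D :: "real poly" and lam eps d :: real
  assumes p: "poly_growth_on {-1..} p" "\<forall>x\<in>{-1..}. p x > 0"
    and lam: "lam > 0" and v_def: "v = (\<lambda>x. p x * exp (- lam * x))"
    and D: "\<forall>x\<ge>-1. poly D x \<noteq> 0" and HND: "\<forall>x\<ge>-1. H x = poly N x / poly D x"
    and Hpos: "\<forall>x>-1. H x > 0" and H0: "H (-1) = 0"
    and Hd: "(H has_real_derivative d) (at (-1) within {-1..})" "d > 0"
    and eps: "0 < eps" "eps \<le> 1"
  shows "in_H_class eps v H"
proof -
  note weighted = weighted_bounded_of_poly_growth[OF p lam v_def eps]
  have open_half_line_subset: "{-1<..} \<subseteq> {-1::real..}" by auto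
  obtain N1 D1 N2 D2 where D1: "\<forall>x\<ge>-1. poly D1 x \<noteq> 0" and D2: "\<forall>x\<ge>-1. poly D2 x \<noteq> 0"
    and H': "\<And>x. x > -1 \<Longrightarrow> deriv H x = poly N1 x / poly D1 x"
    and H'': "\<And>x. x > -1 \<Longrightarrow> deriv (deriv H) x = poly N2 x / poly D2 x"
    by (rule rational_derivatives_on_half_line[OF D HND]) auto
  have growth_H: "poly_growth_on {-1..} H"
    by (rule poly_growth_on_cong[OF poly_growth_on_rational[of "-1" D N]]) (use D HND in auto)
  obtain C1 where "\<forall>x\<in>{-1..}. \<bar>v x powr eps * (H x * H x)\<bar> \<le> C1"
    using weighted[OF poly_growth_on_mult[OF growth_H growth_H] order_refl] by blast
  then have cond1: "\<exists>C. \<forall>x\<in>{-1..}. v x powr eps * (H x)\<^sup>2 \<le> C"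
    by (metis abs_ge_self order_trans power2_eq_square)
  have growth_H': "poly_growth_on {-1<..} (deriv H)"
    by (rule poly_growth_on_cong[OF poly_growth_on_subset[OF poly_growth_on_rational[of "-1" D1 N1]]])
      (use D1 H' in auto)
  obtain C2 where "\<forall>x\<in>{-1<..}. \<bar>v x powr eps * (deriv H x * deriv H x)\<bar> \<le> C2"
    using weighted[OF poly_growth_on_mult[OF growth_H' growth_H'] open_half_line_subset] by blast
  then have cond2: "\<exists>C. \<forall>x\<in>{-1<..}. v x powr eps * \<bar>deriv H x\<bar>\<^sup>2 \<le> C"
    by (metis abs_ge_self order_trans power2_eq_square power2_abs)
  obtain B where B: "\<forall>x\<in>{-1<..-1+1}. \<bar>poly N2 x / poly D2 x\<bar> \<le> B"
    using poly_growth_on_imp_bounded[OF poly_growth_on_subset[OF poly_growth_on_rational[of "-1" D2 N2]],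
        of "{-1<..-1+1}" 1] D2 by fastforce
  have "\<bar>deriv (deriv H) x\<bar>\<^sup>2 < B\<^sup>2 + 1" if "x \<in> {-1<..-1+1}" for x
  proof -
    have "\<bar>deriv (deriv H) x\<bar> \<le> B" using B H'' that by auto
    then have "\<bar>deriv (deriv H) x\<bar>\<^sup>2 \<le> B\<^sup>2" by (intro power_mono) auto
    then show ?thesis by simp
  qed
  then have cond3: "\<exists>\<delta> C. \<delta> > 0 \<and> C > 0 \<and> (\<forall>x\<in>{-1<..-1+\<delta>}. \<bar>deriv (deriv H) x\<bar>\<^sup>2 < C)"
    by (intro exI[of _ 1] exI[of _ "B\<^sup>2 + 1"]) (auto simp: add_nonneg_pos)
  show ?thesis unfolding in_H_class_def
    using cond1 cond2 cond3 symp_potential_weighted_bounds[OF p lam v_def D HND Hpos H0 Hd eps] by blast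
qed

theorem proposition1p3:
  fixes p :: "real \<Rightarrow> real" and q :: "real poly" and lam :: real
    and v w H :: "real \<Rightarrow> real"
  assumes rat: "\<exists>a b :: real poly. \<forall>x\<in>{-1..}. poly b x \<noteq> 0 \<and> p x = poly a x / poly b x"
    and ppos: "\<forall>x\<in>{-1..}. p x > 0"
    and lam: "lam > 0"
    and v_def: "v = (\<lambda>x. p x * exp (- lam * x))"
    and w_def: "w = (\<lambda>x. poly q x * exp (- lam * x))"
    and F_affine: "\<forall>a b. futaki v w (\<lambda>x. a * x + b) = 0"
    and Kst: "K_stable v w"
    and H: "cscK_profile v w H"
  shows "\<forall>eps. 0 < eps \<and> eps < 1/2 \<longrightarrow> in_H_class eps v H"
proof (intro allI impI)
  fix eps :: real assume eps: "0 < eps \<and> eps < 1/2"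
  obtain a b where pab: "\<forall>x\<in>{-1..}. poly b x \<noteq> 0 \<and> p x = poly a x / poly b x"
    using rat by blast
  have p_growth: "poly_growth_on {-1..} p"
    by (rule poly_growth_on_cong[OF poly_growth_on_rational[of "-1" b a]]) (use pab in auto)
  obtain N D where ND: "\<forall>x\<ge>-1. poly D x \<noteq> 0" "\<forall>x\<ge>-1. H x = poly N x / poly D x"
    using cscK_profile_rational[OF pab ppos lam v_def w_def F_affine H] by blast
  have boundary: "\<forall>x>-1. H x > 0" "H (-1) = 0" "(H has_real_derivative 2) (at (-1) within {-1..})"
    using H unfolding cscK_profile_def by auto
  show "in_H_class eps v H"
    by (rule in_H_class_of_rational_profile[OF p_growth ppos lam v_def ND boundary])
      (use eps in auto)
qed

end
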